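(* Let $Q$ be a tree quiver, let $(M,x)$ be a radiation module with $M$ exceptional, and let $\mathcal B=\mathcal B(M,x)$ be a radiation basis. Let $\alpha$ be an arrow of $Q$ connecting vertices $y$ and $z$ with $\dim M_y=\dim M_z$. Then, for suitable orderings of the bases $\mathcal B_y$ and $\mathcal B_z$, the matrix of $M_\alpha$ with respect to these bases is the identity matrix.
   Context: $k$ is a field; $Q$ is a locally finite quiver whose underlying graph is a tree; representations are finite-dimensional; $M$ exceptional means indecomposable with $\operatorname{Ext}^1(M,M)=0$. $S(x)$ is the simple at $x$; $Q^x$ is $Q$ with $x$ and its arrows deleted; restriction to $Q^x$ forgets $M_x$ and maps at $x$. Radiation modules (recursive): pairs $(M,x)$, $M$ indecomposable, $\dim M_x=1$; $(S(x),x)$ is one; if $M$ has length $\ge2$, $(M,x)$ is one if the restriction of $M$ to $Q^x$ is $\bigoplus_iN(i)$, $N(i)$ indecomposable, $\operatorname{Hom}(N(i),N(j))=0$ for $i\ne j$, with neighbors $y(i)$ of $x$ such that $(N(i),y(i))$ are radiation modules. Radiation basis containing nonzero $b\in M_x$ (recursive): $\{b\}$ for $S(x)$; otherwise, with $\alpha_i$ the arrow between $x$ and $y(i)$, let $b_i$ be the $N(i)_{y(i)}$-component of $M_{\alpha_i}(b)$ (with respect to $M_{y(i)}=\bigoplus_jN(j)_{y(i)}$) if $\alpha_i\colon x\to y(i)$, and the element of $N(i)_{y(i)}$ with $M_{\alpha_i}(b_i)=b$ if $\alpha_i\colon y(i)\to x$; $\mathcal B(M,x)=\{b\}\cup\bigcup_i\mathcal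 B(N(i),y(i))$ with $\mathcal B(N(i),y(i))$ a radiation basis of $(N(i),y(i))$ containing $b_i$. $\mathcal B_z$ denotes the elements of $\mathcal B$ in $M_z$. *)

theory Defs
  imports Complex_Main
begin

text \<open>Quivers are given by source and target maps on an arrow type 'a with vertex type 'v
(vertex set = UNIV).  Representations over the field 'k are families of finite-dimensional
subspaces V z of an ambient k-vector space 'w (scalar multiplication s), together with
maps f a which are linear from V (src a) to V (tgt a).\<close>

definition adjacent :: "('a \<Rightarrow> 'v) \<Rightarrow> ('a \<Rightarrow> 'v) \<Rightarrow> 'v \<Rightarrow> 'v \<Rightarrow> bool" where
  "adjacent src tgt u v \<longleftrightarrow> (\<exists>a. (src a = u \<and> tgt a = v) \<or> (src a = v \<and> tgt a = u))"

definition tree_quiver :: "('a \<Rightarrow> 'v) \<Rightarrow> ('a \<Rightarrow> 'v) \<Rightarrow> bool" where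
  "tree_quiver src tgt \<longleftrightarrow>
     (\<forall>a. src a \<noteq> tgt a) \<and>
     (\<forall>a a'. {src a, tgt a} = {src a', tgt a'} \<longrightarrow> a = a') \<and>
     (\<forall>u v. (adjacent src tgt)\<^sup>*\<^sup>* u v) \<and>
     (\<forall>vs. length vs \<ge> 3 \<and> distinct vs \<and>
           (\<forall>i. Suc i < length vs \<longrightarrow> adjacent src tgt (vs ! i) (vs ! Suc i))
           \<longrightarrow> \<not> adjacent src tgt (last vs) (hd vs))"

definition locally_finite :: "('a \<Rightarrow> 'v) \<Rightarrow> ('a \<Rightarrow> 'v) \<Rightarrow> bool" where
  "locally_finite src tgt \<longleftrightarrow> (\<forall>v. finite {a. src a = v \<or> tgt a = v})"

definition lin_on :: "('k \<Rightarrow> 'w \<Rightarrow> 'w) \<Rightarrow> 'w set \<Rightarrow> ('w \<Rightarrow> 'w::ab_group_add) \<Rightarrow> bool" where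
  "lin_on s A g \<longleftrightarrow> (\<forall>x\<in>A. \<forall>y\<in>A. g (x + y) = g x + g y) \<and> (\<forall>c. \<forall>x\<in>A. g (s c x) = s c (g x))"

definition is_rep :: "('k::field \<Rightarrow> 'w::ab_group_add \<Rightarrow> 'w) \<Rightarrow> ('a \<Rightarrow> 'v) \<Rightarrow> ('a \<Rightarrow> 'v) \<Rightarrow>
    ('v \<Rightarrow> 'w set) \<Rightarrow> ('a \<Rightarrow> 'w \<Rightarrow> 'w) \<Rightarrow> bool" where
  "is_rep s src tgt V f \<longleftrightarrow>
     (\<forall>z. module.subspace s (V z)) \<and>
     (\<forall>z. \<exists>B. finite B \<and> B \<subseteq> V z \<and> module.span s B = V z) \<and>
     finite {z. V z \<noteq> {0}} \<and>
     (\<forall>a. \<forall>v\<in>V (src a). f a v \<in> V (tgt a)) \<and>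
     (\<forall>a. lin_on s (V (src a)) (f a))"

definition subrep :: "('k::field \<Rightarrow> 'w::ab_group_add \<Rightarrow> 'w) \<Rightarrow> ('a \<Rightarrow> 'v) \<Rightarrow> ('a \<Rightarrow> 'v) \<Rightarrow>
    ('v \<Rightarrow> 'w set) \<Rightarrow> ('a \<Rightarrow> 'w \<Rightarrow> 'w) \<Rightarrow> ('v \<Rightarrow> 'w set) \<Rightarrow> bool" where
  "subrep s src tgt V f U \<longleftrightarrow>
     (\<forall>z. module.subspace s (U z) \<and> U z \<subseteq> V z) \<and>
     (\<forall>a. \<forall>v\<in>U (src a). f a v \<in> U (tgt a))"

definition nonzero_rep :: "('v \<Rightarrow> 'w::zero set) \<Rightarrow> bool" where
  "nonzero_rep V \<longleftrightarrow> (\<exists>z. V z \<noteq> {0})"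

definition indecomposable :: "('k::field \<Rightarrow> 'w::ab_group_add \<Rightarrow> 'w) \<Rightarrow> ('a \<Rightarrow> 'v) \<Rightarrow> ('a \<Rightarrow> 'v) \<Rightarrow>
    ('v \<Rightarrow> 'w set) \<Rightarrow> ('a \<Rightarrow> 'w \<Rightarrow> 'w) \<Rightarrow> bool" where
  "indecomposable s src tgt V f \<longleftrightarrow> nonzero_rep V \<and>
     \<not> (\<exists>U1 U2. subrep s src tgt V f U1 \<and> subrep s src tgt V f U2 \<and>
              nonzero_rep U1 \<and> nonzero_rep U2 \<and>
              (\<forall>z. U1 z \<inter> U2 z = {0} \<and> {u1 + u2 | u1 u2. u1 \<in> U1 z \<and> u2 \<in> U2 z} = V z))"

text \<open>Ext^1(M,M) = 0, via the standard description of Ext^1 for quiver representations as the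
cokernel of  (phi_z)_z \<mapsto> (M_a phi_{src a} - phi_{tgt a} M_a)_a.\<close>
definition ext1_vanishes :: "('k::field \<Rightarrow> 'w::ab_group_add \<Rightarrow> 'w) \<Rightarrow> ('a \<Rightarrow> 'v) \<Rightarrow> ('a \<Rightarrow> 'v) \<Rightarrow>
    ('v \<Rightarrow> 'w set) \<Rightarrow> ('a \<Rightarrow> 'w \<Rightarrow> 'w) \<Rightarrow> bool" where
  "ext1_vanishes s src tgt V f \<longleftrightarrow>
     (\<forall>h. (\<forall>a. lin_on s (V (src a)) (h a) \<and> h a ` V (src a) \<subseteq> V (tgt a)) \<longrightarrow>
        (\<exists>\<phi>. (\<forall>z. lin_on s (V z) (\<phi> z) \<and> \<phi> z ` V z \<subseteq> V z) \<and>
             (\<forall>a. \<forall>v\<in>V (src a). h a v = f a (\<phi> (src a) v) - \<phi> (tgt a) (f a v))))"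

definition exceptional :: "('k::field \<Rightarrow> 'w::ab_group_add \<Rightarrow> 'w) \<Rightarrow> ('a \<Rightarrow> 'v) \<Rightarrow> ('a \<Rightarrow> 'v) \<Rightarrow>
    ('v \<Rightarrow> 'w set) \<Rightarrow> ('a \<Rightarrow> 'w \<Rightarrow> 'w) \<Rightarrow> bool" where
  "exceptional s src tgt V f \<longleftrightarrow> indecomposable s src tgt V f \<and> ext1_vanishes s src tgt V f"

definition hom_zero :: "('k::field \<Rightarrow> 'w::ab_group_add \<Rightarrow> 'w) \<Rightarrow> ('a \<Rightarrow> 'v) \<Rightarrow> ('a \<Rightarrow> 'v) \<Rightarrow>
    ('v \<Rightarrow> 'w set) \<Rightarrow> ('a \<Rightarrow> 'w \<Rightarrow> 'w) \<Rightarrow> ('v \<Rightarrow> 'w set) \<Rightarrow> ('a \<Rightarrow> 'w \<Rightarrow> 'w) \<Rightarrow> bool" where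
  "hom_zero s src tgt V f V' f' \<longleftrightarrow>
     (\<forall>\<phi>. (\<forall>z. lin_on s (V z) (\<phi> z) \<and> \<phi> z ` V z \<subseteq> V' z) \<and>
          (\<forall>a. \<forall>v\<in>V (src a). \<phi> (tgt a) (f a v) = f' a (\<phi> (src a) v))
          \<longrightarrow> (\<forall>z. \<forall>v\<in>V z. \<phi> z v = 0))"

definition is_dsum :: "('v \<Rightarrow> 'w::ab_group_add set) \<Rightarrow> (nat \<Rightarrow> 'v \<Rightarrow> 'w set) \<Rightarrow> nat set \<Rightarrow> bool" where
  "is_dsum V N I \<longleftrightarrow> (\<forall>z. (\<forall>i\<in>I. N i z \<subseteq> V z) \<and>
     (\<forall>v\<in>V z. \<exists>!u. (\<forall>i\<in>I. u i \<in> N i z) \<and> (\<forall>i. i \<notin> I \<longrightarrow> u i = 0) \<and> v = sum u I))"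

definition rep_length :: "('k::field \<Rightarrow> 'w::ab_group_add \<Rightarrow> 'w) \<Rightarrow> ('v \<Rightarrow> 'w set) \<Rightarrow> nat" where
  "rep_length s V = (\<Sum>z\<in>{z. V z \<noteq> {0}}. vector_space.dim s (V z))"

text \<open>Restriction to Q^x, encoded as a representation of Q vanishing at x.\<close>
definition rest_sp :: "'v \<Rightarrow> ('v \<Rightarrow> 'w::zero set) \<Rightarrow> 'v \<Rightarrow> 'w set" where
  "rest_sp x V = (\<lambda>z. if z = x then {0} else V z)"

definition rest_map :: "('a \<Rightarrow> 'v) \<Rightarrow> ('a \<Rightarrow> 'v) \<Rightarrow> 'v \<Rightarrow> ('a \<Rightarrow> 'w \<Rightarrow> 'w::zero) \<Rightarrow> 'a \<Rightarrow> 'w \<Rightarrow> 'w" where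
  "rest_map src tgt x f = (\<lambda>a. if src a = x \<or> tgt a = x then (\<lambda>_. 0) else f a)"

inductive radiation :: "('k::field \<Rightarrow> 'w::ab_group_add \<Rightarrow> 'w) \<Rightarrow> ('a \<Rightarrow> 'v) \<Rightarrow> ('a \<Rightarrow> 'v) \<Rightarrow>
    ('v \<Rightarrow> 'w set) \<Rightarrow> ('a \<Rightarrow> 'w \<Rightarrow> 'w) \<Rightarrow> 'v \<Rightarrow> bool"
  for s src tgt where
  simple: "\<lbrakk> vector_space.dim s (V x) = 1; \<forall>z. z \<noteq> x \<longrightarrow> V z = {0} \<rbrakk>
     \<Longrightarrow> radiation s src tgt V f x"
| step: "\<lbrakk> indecomposable s src tgt V f; vector_space.dim s (V x) = 1; rep_length s V \<ge> 2;
           finite I;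
           \<forall>i\<in>I. subrep s src tgt (rest_sp x V) (rest_map src tgt x f) (N i);
           is_dsum (rest_sp x V) N I;
           \<forall>i\<in>I. indecomposable s src tgt (N i) (rest_map src tgt x f);
           \<forall>i\<in>I. \<forall>j\<in>I. i \<noteq> j \<longrightarrow>
              hom_zero s src tgt (N i) (rest_map src tgt x f) (N j) (rest_map src tgt x f);
           \<forall>i\<in>I. adjacent src tgt x (y i) \<and> radiation s src tgt (N i) (rest_map src tgt x f) (y i) \<rbrakk>
     \<Longrightarrow> radiation s src tgt V f x"

text \<open>Radiation bases; elements are tagged with their vertex.\<close>
inductive radbasis :: "('k::field \<Rightarrow> 'w::ab_group_add \<Rightarrow> 'w) \<Rightarrow> ('a \<Rightarrow> 'v) \<Rightarrow> ('a \<Rightarrow> 'v) \<Rightarrow>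
    ('v \<Rightarrow> 'w set) \<Rightarrow> ('a \<Rightarrow> 'w \<Rightarrow> 'w) \<Rightarrow> 'v \<Rightarrow> 'w \<Rightarrow> ('v \<times> 'w) set \<Rightarrow> bool"
  for s src tgt where
  simple: "\<lbrakk> vector_space.dim s (V x) = 1; \<forall>z. z \<noteq> x \<longrightarrow> V z = {0}; b \<in> V x; b \<noteq> 0 \<rbrakk>
     \<Longrightarrow> radbasis s src tgt V f x b {(x, b)}"
| step: "\<lbrakk> indecomposable s src tgt V f; vector_space.dim s (V x) = 1; rep_length s V \<ge> 2;
           b \<in> V x; b \<noteq> 0;
           finite I;
           \<forall>i\<in>I. subrep s src tgt (rest_sp x V) (rest_map src tgt x f) (N i);
           is_dsum (rest_sp x V) N I;
           \<forall>i\<in>I. indecomposable s src tgt (N i) (rest_map src tgt x f);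
           \<forall>i\<in>I. \<forall>j\<in>I. i \<noteq> j \<longrightarrow>
              hom_zero s src tgt (N i) (rest_map src tgt x f) (N j) (rest_map src tgt x f);
           \<forall>i\<in>I. adjacent src tgt x (y i) \<and> radiation s src tgt (N i) (rest_map src tgt x f) (y i);
           \<forall>i\<in>I. bb i \<in> N i (y i) \<and>
              (\<exists>a. (src a = x \<and> tgt a = y i \<and>
                     (\<exists>u. (\<forall>j\<in>I. u j \<in> N j (y i)) \<and> f a b = sum u I \<and> u i = bb i))
                 \<or> (src a = y i \<and> tgt a = x \<and> f a (bb i) = b));
           \<forall>i\<in>I. radbasis s src tgt (N i) (rest_map src tgt x f) (y i) (bb i) (BB i) \<rbrakk>
     \<Longrightarrow> radbasis s src tgt V f x b ({(x, b)} \<union> (\<Union>i\<in>I. BB i))"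

end

theory Submission
  imports Defs "HOL-Library.Transitive_Closure_Table"
begin

text \<open>
  The argument has two halves.  The combinatorial half describes how an arrow acts on a radiation
  basis B rooted at x: orienting every edge of the tree towards x, an arrow pointing towards x
  sends basis vectors to basis vectors, while an arrow pointing away from x sends each basis
  vector d at its source to the sum of the fibre over d of some map p from the basis at its target
  to the basis at its source.  This is proved by induction along the recursive construction of B,
  using that each summand of the restriction to the complement of x is supported on a single
  branch at x (an indecomposability argument).

  The representation-theoretic half uses Ext^1 = 0: an arrow map with nonzero kernel must be
  surjective.  If the dimensions at both ends agree, a non-injective map of the first kind, or a
  non-surjective fibre map p, would produce a kernel vector together with an image spanned by too
  few vectors.  Hence the action is a bijection between the two bases, and enumerating them
  compatibly yields the identity matrix.
\<close>

subsection \<open>Trees: orienting edges towards a root\<close>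

lemma adjacent_sym: "adjacent src tgt u v = adjacent src tgt v u"
  unfolding adjacent_def by auto

lemma adjacent_arrow: "adjacent src tgt (src a) (tgt a)"
  unfolding adjacent_def by blast

lemma adjacent_neq: "tree_quiver src tgt \<Longrightarrow> adjacent src tgt u v \<Longrightarrow> u \<noteq> v"
  unfolding adjacent_def tree_quiver_def by metis

lemma arrow_unique: "tree_quiver src tgt \<Longrightarrow> {src a, tgt a} = {src a', tgt a'} \<Longrightarrow> a = a'"
  unfolding tree_quiver_def by blast

lemma rtrancl_path_nth:
  "rtrancl_path r x xs y \<Longrightarrow>
     (\<forall>i. Suc i < length (x#xs) \<longrightarrow> r ((x#xs)!i) ((x#xs)!Suc i)) \<and> last (x#xs) = y"
proof (induct rule: rtrancl_path.induct)
  case (step x y ys z)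
  then show ?case by (auto simp: nth_Cons split: nat.split)
qed simp

text \<open>Removing an edge of a tree disconnects its endpoints; this is where acyclicity is used.\<close>
lemma no_other_path:
  assumes T: "tree_quiver src tgt" and uv: "adjacent src tgt u v"
  shows "\<not> (\<lambda>a b. adjacent src tgt a b \<and> {a,b} \<noteq> {u,v})\<^sup>*\<^sup>* v u"
proof
  let ?E = "\<lambda>a b. adjacent src tgt a b \<and> {a,b} \<noteq> {u,v}"
  assume "?E\<^sup>*\<^sup>* v u"
  then obtain xs where "rtrancl_path ?E v xs u" by (auto simp: rtranclp_eq_rtrancl_path)
  then obtain xs' where p: "rtrancl_path ?E v xs' u" and d: "distinct (v # xs')"
    by (rule rtrancl_path_distinct)
  from rtrancl_path_nth[OF p]
  have steps: "\<forall>i. Suc i < length (v#xs') \<longrightarrow> ?E ((v#xs')!i) ((v#xs')!Suc i)"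
    and l: "last (v#xs') = u" by auto
  have "xs' \<noteq> []" using l adjacent_neq[OF T uv] by auto
  moreover have "xs' \<noteq> [u]"
  proof
    assume "xs' = [u]"
    then show False using steps[rule_format, of 0] by (auto simp: insert_commute)
  qed
  ultimately have "length (v#xs') \<ge> 3"
    using l by (cases xs'; cases "tl xs'") auto
  moreover have "\<forall>i. Suc i < length (v#xs') \<longrightarrow> adjacent src tgt ((v#xs')!i) ((v#xs')!Suc i)"
    using steps by blast
  ultimately have "\<not> adjacent src tgt (last (v#xs')) (hd (v#xs'))"
    using T d unfolding tree_quiver_def by blast
  then show False using l uv by (simp add: adjacent_sym)
qed

definition ravoid :: "('a \<Rightarrow> 'v) \<Rightarrow> ('a \<Rightarrow> 'v) \<Rightarrow> 'v set \<Rightarrow> 'v \<Rightarrow> 'v \<Rightarrow> bool" where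
  "ravoid src tgt A = (\<lambda>a b. adjacent src tgt a b \<and> a \<notin> A \<and> b \<notin> A)\<^sup>*\<^sup>*"

text \<open>near src tgt r u v: every path from v to the root r passes through u,
  i.e.\ u lies between r and v.\<close>
definition near :: "('a \<Rightarrow> 'v) \<Rightarrow> ('a \<Rightarrow> 'v) \<Rightarrow> 'v \<Rightarrow> 'v \<Rightarrow> 'v \<Rightarrow> bool" where
  "near src tgt r u v \<longleftrightarrow> \<not> ravoid src tgt {u} v r"

lemma ravoid_sym: "ravoid src tgt A a b \<Longrightarrow> ravoid src tgt A b a"
proof -
  have conv: "(\<lambda>a b. adjacent src tgt a b \<and> a \<notin> A \<and> b \<notin> A)\<inverse>\<inverse>
      = (\<lambda>a b. adjacent src tgt a b \<and> a \<notin> A \<and> b \<notin> A)"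
    by (auto simp: adjacent_sym fun_eq_iff)
  assume "ravoid src tgt A a b"
  then show ?thesis
    using rtranclp_converseI[where r = "\<lambda>a b. adjacent src tgt a b \<and> a \<notin> A \<and> b \<notin> A"]
    unfolding ravoid_def conv by blast
qed

lemma ravoid_in: "ravoid src tgt A a b \<Longrightarrow> b \<in> A \<Longrightarrow> a = b"
  unfolding ravoid_def by (induct rule: rtranclp_induct) auto

lemma ravoid_step:
  "ravoid src tgt A a b \<Longrightarrow> adjacent src tgt b c \<Longrightarrow> b \<notin> A \<Longrightarrow> c \<notin> A \<Longrightarrow> ravoid src tgt A a c"
  unfolding ravoid_def by (auto intro: rtranclp.rtrancl_into_rtrancl)

lemma ravoid_avoids_edge:
  assumes "ravoid src tgt {w} a b"
  shows "(\<lambda>a b. adjacent src tgt a b \<and> {a,b} \<noteq> {u,w})\<^sup>*\<^sup>* a b"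
  using assms unfolding ravoid_def
proof (induct rule: rtranclp_induct)
  case (step y z)
  then have "{y,z} \<noteq> {u,w}" by (auto simp: doubleton_eq_iff)
  with step show ?case by (auto intro: rtranclp.rtrancl_into_rtrancl)
qed simp

lemma near_root: "near src tgt r v r \<Longrightarrow> v = r"
  unfolding near_def ravoid_def by auto

lemma near_shift:
  assumes "near src tgt x u v" "x \<noteq> u" "adjacent src tgt x r" "v \<noteq> u"
  shows "near src tgt r u v"
proof -
  { assume R: "ravoid src tgt {u} v r"
    have "r \<noteq> u" using ravoid_in[OF R] assms(4) by auto
    then have "ravoid src tgt {u} v x" using ravoid_step[OF R, of x] assms by (simp add: adjacent_sym)
    then have False using assms(1) unfolding near_def by simp }
  then show ?thesis unfolding near_def by blast
qed

lemma edge_oriented: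
  assumes T: "tree_quiver src tgt" and uv: "adjacent src tgt u v"
  shows "near src tgt r u v \<or> near src tgt r v u"
proof (rule ccontr)
  assume "\<not> ?thesis"
  then have 1: "ravoid src tgt {u} v r" and 2: "ravoid src tgt {v} u r" unfolding near_def by auto
  let ?E = "\<lambda>a b. adjacent src tgt a b \<and> {a,b} \<noteq> {u,v}"
  have "?E\<^sup>*\<^sup>* v r" using ravoid_avoids_edge[OF 1, of v] by (simp add: insert_commute)
  moreover have "?E\<^sup>*\<^sup>* r u" using ravoid_avoids_edge[OF ravoid_sym[OF 2], of u] by simp
  ultimately have "?E\<^sup>*\<^sup>* v u" by simp
  then show False using no_other_path[OF T uv] by simp
qed

lemma neighbours_separated:
  assumes T: "tree_quiver src tgt" and a1: "adjacent src tgt x y" and a2: "adjacent src tgt x v"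
    and ne: "y \<noteq> v"
  shows "\<not> ravoid src tgt {x} y v"
proof
  assume R: "ravoid src tgt {x} y v"
  let ?E = "\<lambda>a b. adjacent src tgt a b \<and> {a,b} \<noteq> {v,x}"
  have "{x,y} \<noteq> {v,x}" using ne adjacent_neq[OF T a2] by (simp add: doubleton_eq_iff)
  then have "?E x y" using a1 by simp
  moreover have "?E\<^sup>*\<^sup>* y v" using ravoid_avoids_edge[OF R, of v] .
  ultimately have "?E\<^sup>*\<^sup>* x v" by (rule converse_rtranclp_into_rtranclp)
  then show False using no_other_path[OF T, of v x] a2 by (simp add: adjacent_sym)
qed

subsection \<open>Internal direct sums\<close>

lemma dsum_sub: "is_dsum W N I \<Longrightarrow> i \<in> I \<Longrightarrow> N i z \<subseteq> W z"
  unfolding is_dsum_def by blast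

lemma dsum_ex1:
  "is_dsum W N I \<Longrightarrow> v \<in> W z \<Longrightarrow>
     \<exists>!u. (\<forall>i\<in>I. u i \<in> N i z) \<and> (\<forall>i. i \<notin> I \<longrightarrow> u i = 0) \<and> v = sum u I"
  unfolding is_dsum_def by simp

lemma dsum_decomp: "is_dsum W N I \<Longrightarrow> v \<in> W z \<Longrightarrow> \<exists>u. (\<forall>i\<in>I. u i \<in> N i z) \<and> v = sum u I"
  by (drule dsum_ex1) (auto dest: ex1_implies_ex)

lemma dsum_unique:
  assumes D: "is_dsum W N I" and v: "v \<in> W z"
    and u1: "\<forall>i\<in>I. u1 i \<in> N i z" "v = sum u1 I"
    and u2: "\<forall>i\<in>I. u2 i \<in> N i z" "v = sum u2 I"
    and i: "i \<in> I"
  shows "u1 i = u2 i"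
proof -
  let ?P = "\<lambda>u. (\<forall>i\<in>I. u i \<in> N i z) \<and> (\<forall>i. i \<notin> I \<longrightarrow> u i = 0) \<and> v = sum u I"
  let ?u1 = "\<lambda>k. if k \<in> I then u1 k else 0" and ?u2 = "\<lambda>k. if k \<in> I then u2 k else 0"
  have ex: "\<exists>!u. ?P u" using D v by (rule dsum_ex1)
  have s: "sum ?u1 I = sum u1 I" "sum ?u2 I = sum u2 I" by (auto intro: sum.cong)
  have p1: "?P ?u1" using u1 s by auto
  have p2: "?P ?u2" using u2 s by auto
  have "Uniq ?P" using ex ex1_iff_ex_Uniq[where P = ?P] by blast
  then have "?u1 = ?u2" using Uniq_D[where P = ?P, OF _ p1 p2] by blast
  then show ?thesis using i by (metis (full_types))
qed

context vector_space begin

lemma dsum_disjoint: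
  assumes D: "is_dsum W N I" and fin: "finite I" and sub: "\<forall>k\<in>I. subspace (N k z)"
    and ij: "i \<in> I" "j \<in> I" "i \<noteq> j" and w: "w \<in> N i z" "w \<in> N j z"
  shows "w = 0"
proof -
  have N0: "0 \<in> N k z" if "k \<in> I" for k using subspace_0 sub that by blast
  let ?ui = "\<lambda>k. if k = i then w else 0" and ?uj = "\<lambda>k. if k = j then w else 0"
  have wW: "w \<in> W z" using dsum_sub[OF D ij(1)] w(1) by blast
  have ui: "\<forall>k\<in>I. ?ui k \<in> N k z" "w = sum ?ui I" using w N0 ij fin by (auto simp: sum.delta)
  have uj: "\<forall>k\<in>I. ?uj k \<in> N k z" "w = sum ?uj I" using w N0 ij fin by (auto simp: sum.delta)
  have "?ui i = ?uj i" by (rule dsum_unique[OF D wW ui uj ij(1)])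
  then show ?thesis using ij by simp
qed

lemma dsum_zero:
  assumes D: "is_dsum W N I" and sub: "\<forall>k\<in>I. subspace (N k z)"
    and u: "\<forall>k\<in>I. u k \<in> N k z" and s0: "sum u I = 0" and i: "i \<in> I"
  shows "u i = 0"
proof -
  have "0 \<in> W z" using dsum_sub[OF D i] subspace_0[OF sub[rule_format, OF i]] by blast
  then show ?thesis
    using dsum_unique[OF D _ u s0[symmetric], of "\<lambda>_. 0" i] sub subspace_0 i by simp
qed

lemma dsum_independent_Union:
  assumes D: "is_dsum W N I" and fin: "finite I" and sub: "\<forall>i\<in>I. subspace (N i z)"
    and A: "\<forall>i\<in>I. A i \<subseteq> N i z \<and> 0 \<notin> A i \<and> independent (A i)"
  shows "independent (\<Union>i\<in>I. A i)"
proof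
  assume "dependent (\<Union>i\<in>I. A i)"
  then obtain t u where t: "finite t" "t \<subseteq> (\<Union>i\<in>I. A i)" "(\<Sum>v\<in>t. u v *s v) = 0"
    and nz: "\<exists>v\<in>t. u v \<noteq> 0" unfolding dependent_explicit by blast
  have disj: "A i \<inter> A j = {}" if "i \<in> I" "j \<in> I" "i \<noteq> j" for i j
  proof -
    have "w = 0" if "w \<in> A i" "w \<in> A j" for w
      using dsum_disjoint[OF D fin sub \<open>i \<in> I\<close> \<open>j \<in> I\<close> \<open>i \<noteq> j\<close>] A that
        \<open>i \<in> I\<close> \<open>j \<in> I\<close> by blast
    then show ?thesis using A \<open>i \<in> I\<close> by blast
  qed
  define g where "g i = (\<Sum>v\<in>t \<inter> A i. u v *s v)" for i
  have gN: "\<forall>i\<in>I. g i \<in> N i z"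
    unfolding g_def using sub A by (auto intro!: subspace_sum subspace_scale)
  have "t = (\<Union>i\<in>I. t \<inter> A i)" using t(2) by blast
  then have "(\<Sum>v\<in>t. u v *s v) = (\<Sum>v\<in>(\<Union>i\<in>I. t \<inter> A i). u v *s v)" by simp
  also have "\<dots> = (\<Sum>i\<in>I. g i)"
    unfolding g_def by (rule sum.UNION_disjoint) (use fin t(1) disj in auto)
  finally have "sum g I = 0" using t(3) by simp
  then have g0: "g i = 0" if "i \<in> I" for i using dsum_zero[OF D sub gN _ that] by simp
  from nz t(2) obtain v i where v: "v \<in> t" "u v \<noteq> 0" and i: "i \<in> I" "v \<in> A i" by blast
  have "(\<Sum>v\<in>t \<inter> A i. u v *s v) = 0" using g0[OF i(1)] unfolding g_def .
  then have "dependent (A i)" unfolding dependent_explicit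
    using i v t(1) by (intro exI[of _ "t \<inter> A i"] exI[of _ u]) auto
  then show False using A i by blast
qed

lemma dsum_span_Union:
  assumes D: "is_dsum W N I" and sp: "\<forall>i\<in>I. N i z \<subseteq> span (A i)"
  shows "W z \<subseteq> span (\<Union>i\<in>I. A i)"
proof
  fix v assume "v \<in> W z"
  then obtain u where u: "\<forall>i\<in>I. u i \<in> N i z" "v = sum u I" using dsum_decomp[OF D] by blast
  have "u i \<in> span (\<Union>i\<in>I. A i)" if "i \<in> I" for i
    using u(1) sp span_mono[of "A i" "\<Union>i\<in>I. A i"] that by blast
  then show "v \<in> span (\<Union>i\<in>I. A i)" using u(2) by (simp add: span_sum)
qed

lemma dim_one_span:
  assumes "dim U = 1" "b \<in> U" "b \<noteq> 0"
  shows "U \<subseteq> span {b}"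
proof -
  obtain C where C: "{b} \<subseteq> C" "C \<subseteq> U" "independent C" "U \<subseteq> span C"
    using maximal_independent_subset_extend[of "{b}" U] assms by auto
  have "card C = 1" using basis_card_eq_dim[OF C(2) C(4) C(3)] assms by simp
  then have "C = {b}" using C(1) by (metis card_1_singletonE insert_subset singletonD)
  then show ?thesis using C by simp
qed

end

subsection \<open>Radiation bases are bases\<close>

definition basis_at :: "('v \<times> 'w) set \<Rightarrow> 'v \<Rightarrow> 'w set" where
  "basis_at B z = {w. (z, w) \<in> B}"

lemma basis_at_step:
  "z \<noteq> x \<Longrightarrow> basis_at ({(x, b)} \<union> (\<Union>i\<in>I. BB i)) z = (\<Union>i\<in>I. basis_at (BB i) z)"
  unfolding basis_at_def by auto

lemma radbasis_basic:
  assumes "radbasis s src tgt V f x b B"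
  shows "finite B \<and> (\<forall>z w. (z,w) \<in> B \<longrightarrow> w \<in> V z \<and> w \<noteq> 0) \<and> basis_at B x = {b}"
  using assms
proof induct
  case (simple V x b f)
  then show ?case by (auto simp: basis_at_def)
next
  case (step V f x b I N y bb BB)
  have "w \<in> V z \<and> w \<noteq> 0 \<and> z \<noteq> x" if "i \<in> I" "(z,w) \<in> BB i" for i z w
  proof -
    have "w \<in> N i z" "w \<noteq> 0" using step that by blast+
    moreover have "N i z \<subseteq> rest_sp x V z" using dsum_sub[OF step(8) that(1)] .
    ultimately show ?thesis by (cases "z = x") (auto simp: rest_sp_def)
  qed
  then show ?case using step(4,5,6,13) by (fastforce simp: basis_at_def)
qed

lemma radbasis_step_root:
  assumes D: "is_dsum (rest_sp x V) N I"
    and R: "\<forall>i\<in>I. radbasis s src tgt (N i) g (y i) (bb i) (BB i)"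
  shows "basis_at ({(x, b)} \<union> (\<Union>i\<in>I. BB i)) x = {b}"
proof -
  have "w \<notin> basis_at (BB i) x" if "i \<in> I" for i w
    using radbasis_basic[OF bspec[OF R that]] dsum_sub[OF D that, of x]
    by (auto simp: rest_sp_def basis_at_def)
  then show ?thesis unfolding basis_at_def by blast
qed

context vector_space begin

lemma radbasis_independent:
  assumes "radbasis scale src tgt V f x b B" "\<forall>z. subspace (V z)"
  shows "independent (basis_at B z)"
  using assms
proof (induct arbitrary: z)
  case (simple V x b f)
  then show ?case by (cases "z = x") (auto simp: basis_at_def independent_empty)
next
  case (step V f x b I N y bb BB)
  show ?case
  proof (cases "z = x")
    case True
    have "\<forall>i\<in>I. radbasis scale src tgt (N i) (rest_map src tgt x f) (y i) (bb i) (BB i)"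
      using step(13) by simp
    then have "basis_at ({(x, b)} \<union> (\<Union>i\<in>I. BB i)) z = {b}"
      using radbasis_step_root[OF step(8)] True by simp
    then show ?thesis using step(5) by (simp add: independent_insert independent_empty)
  next
    case False
    have summand: "basis_at (BB i) z \<subseteq> N i z \<and> 0 \<notin> basis_at (BB i) z
        \<and> independent (basis_at (BB i) z)" if i: "i \<in> I" for i
    proof -
      have sub: "\<forall>z. subspace (N i z)" using step(7) i unfolding subrep_def by blast
      have R: "radbasis scale src tgt (N i) (rest_map src tgt x f) (y i) (bb i) (BB i)"
        and IH: "(\<forall>z. subspace (N i z)) \<longrightarrow> (\<forall>z. independent (basis_at (BB i) z))"
        using bspec[OF step(13) i] by simp_all
      show ?thesis using radbasis_basic[OF R] IH sub unfolding basis_at_def by blast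
    qed
    have "\<forall>i\<in>I. subspace (N i z)" using step(7) unfolding subrep_def by blast
    then show ?thesis unfolding basis_at_step[OF False]
      by (rule dsum_independent_Union[OF step(8) step(6)]) (use summand in blast)
  qed
qed

lemma radbasis_spans:
  assumes "radbasis scale src tgt V f x b B" "\<forall>z. subspace (V z)"
  shows "V z \<subseteq> span (basis_at B z)"
  using assms
proof (induct arbitrary: z)
  case (simple V x b f)
  then show ?case
    using dim_one_span[of "V x" b] by (cases "z = x") (auto simp: basis_at_def span_zero)
next
  case (step V f x b I N y bb BB)
  show ?case
  proof (cases "z = x")
    case True
    have "\<forall>i\<in>I. radbasis scale src tgt (N i) (rest_map src tgt x f) (y i) (bb i) (BB i)"
      using step(13) by simp
    then have "basis_at ({(x, b)} \<union> (\<Union>i\<in>I. BB i)) z = {b}"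
      using radbasis_step_root[OF step(8)] True by simp
    then show ?thesis using True dim_one_span step(2,4,5) by simp
  next
    case False
    have "N i z \<subseteq> span (basis_at (BB i) z)" if i: "i \<in> I" for i
    proof -
      have sub: "\<forall>z. subspace (N i z)" using step(7) i unfolding subrep_def by blast
      have "(\<forall>z. subspace (N i z)) \<longrightarrow> (\<forall>z. N i z \<subseteq> span (basis_at (BB i) z))"
        using bspec[OF step(13) i] by simp
      then show ?thesis using sub by blast
    qed
    then have "rest_sp x V z \<subseteq> span (\<Union>i\<in>I. basis_at (BB i) z)"
      by (intro dsum_span_Union[OF step(8)]) blast
    then show ?thesis unfolding basis_at_step[OF False] using False by (simp add: rest_sp_def)
  qed
qed

lemma radbasis_basis_at:
  assumes R: "radbasis scale src tgt V f x b B" and sub: "\<forall>z. subspace (V z)"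
  shows "basis_at B z \<subseteq> V z" "independent (basis_at B z)" "V z \<subseteq> span (basis_at B z)"
    "finite (basis_at B z)" "card (basis_at B z) = dim (V z)"
proof -
  have basic: "finite B" "\<forall>z w. (z,w) \<in> B \<longrightarrow> w \<in> V z \<and> w \<noteq> 0" using radbasis_basic[OF R] by auto
  show inV: "basis_at B z \<subseteq> V z" using basic unfolding basis_at_def by blast
  show ind: "independent (basis_at B z)" using radbasis_independent[OF R sub] .
  show spn: "V z \<subseteq> span (basis_at B z)" using radbasis_spans[OF R sub] .
  have "basis_at B z = snd ` (B \<inter> {z} \<times> UNIV)" unfolding basis_at_def by force
  then show "finite (basis_at B z)" using basic by simp
  show "card (basis_at B z) = dim (V z)" using basis_card_eq_dim[OF inV spn ind] .
qed

subsection \<open>Supports of indecomposable representations\<close>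

lemma subrep_vertex_set:
  assumes sub: "\<forall>z. subspace (N z)" and cl: "\<forall>a. \<forall>w\<in>N (src a). g a w \<in> N (tgt a)"
    and g0: "\<forall>a. g a 0 = 0"
    and cut: "\<forall>a. (src a \<in> C) \<noteq> (tgt a \<in> C) \<longrightarrow> (\<forall>w. g a w = 0)"
  shows "subrep scale src tgt N g (\<lambda>z. if z \<in> C then N z else {0})"
  unfolding subrep_def
proof (intro conjI allI ballI)
  fix z
  show "subspace (if z \<in> C then N z else {0})" using sub by (simp add: subspace_single_0)
  show "(if z \<in> C then N z else {0}) \<subseteq> N z" using sub subspace_0 by auto
next
  fix a w assume w: "w \<in> (if src a \<in> C then N (src a) else {0})"
  then show "g a w \<in> (if tgt a \<in> C then N (tgt a) else {0})"
    using cl g0 cut[rule_format, of a w] subspace_0[OF sub[rule_format]]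
    by (cases "src a \<in> C"; cases "tgt a \<in> C") auto
qed

lemma indecomposable_vertex_set:
  assumes ind: "indecomposable scale src tgt N g"
    and sub: "\<forall>z. subspace (N z)" and cl: "\<forall>a. \<forall>w\<in>N (src a). g a w \<in> N (tgt a)"
    and g0: "\<forall>a. g a 0 = 0"
    and cut: "\<forall>a. (src a \<in> C) \<noteq> (tgt a \<in> C) \<longrightarrow> (\<forall>w. g a w = 0)"
    and inC: "z \<in> C" "N z \<noteq> {0}"
  shows "N z' = {0} \<or> z' \<in> C"
proof (rule ccontr)
  assume out: "\<not> ?thesis"
  define U1 where "U1 = (\<lambda>z. if z \<in> C then N z else {0})"
  define U2 where "U2 = (\<lambda>z. if z \<in> -C then N z else {0})"
  have "subrep scale src tgt N g U1" unfolding U1_def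
    by (rule subrep_vertex_set[OF sub cl g0 cut])
  moreover have "subrep scale src tgt N g U2" unfolding U2_def
    by (rule subrep_vertex_set[OF sub cl g0]) (use cut in auto)
  moreover have "nonzero_rep U1" "nonzero_rep U2"
    using inC out unfolding nonzero_rep_def U1_def U2_def by (metis ComplI)+
  moreover have "U1 z \<inter> U2 z = {0} \<and> {u1 + u2 | u1 u2. u1 \<in> U1 z \<and> u2 \<in> U2 z} = N z" for z
    using subspace_0[OF sub[rule_format, of z]] by (auto simp: U1_def U2_def)
  ultimately show False using ind unfolding indecomposable_def by blast
qed

lemma restriction_support:
  assumes T: "tree_quiver src tgt"
    and ind: "indecomposable scale src tgt N (rest_map src tgt x f)"
    and sub: "\<forall>z. subspace (N z)"
    and cl: "\<forall>a. \<forall>w\<in>N (src a). rest_map src tgt x f a w \<in> N (tgt a)"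
    and f0: "\<forall>a. f a 0 = 0"
    and y: "adjacent src tgt x y" "N y \<noteq> {0}"
    and v: "adjacent src tgt x v" "v \<noteq> y"
  shows "N v = {0}"
proof -
  define C where "C = {z. ravoid src tgt {x} y z}"
  have cut: "\<forall>a. (src a \<in> C) \<noteq> (tgt a \<in> C) \<longrightarrow> (\<forall>w. rest_map src tgt x f a w = 0)"
  proof (intro allI impI)
    fix a w assume a: "(src a \<in> C) \<noteq> (tgt a \<in> C)"
    have "src a = x \<or> tgt a = x"
      using a ravoid_step[of src tgt "{x}" y "src a" "tgt a"]
        ravoid_step[of src tgt "{x}" y "tgt a" "src a"] adjacent_arrow[of src tgt a]
      unfolding C_def by (auto simp: adjacent_sym)
    then show "rest_map src tgt x f a w = 0" by (simp add: rest_map_def)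
  qed
  have g0: "\<forall>a. rest_map src tgt x f a 0 = 0" using f0 by (simp add: rest_map_def)
  have "y \<in> C" unfolding C_def ravoid_def by simp
  then have "N v = {0} \<or> v \<in> C" using indecomposable_vertex_set[OF ind sub cl g0 cut] y(2) by blast
  then show ?thesis using neighbours_separated[OF T y(1) v(1)] v(2) unfolding C_def by auto
qed

end

subsection \<open>How the arrows act on a radiation basis\<close>

definition sums_fibres ::
    "('a \<Rightarrow> 'v) \<Rightarrow> ('a \<Rightarrow> 'v) \<Rightarrow> ('a \<Rightarrow> 'w \<Rightarrow> 'w::comm_monoid_add) \<Rightarrow> ('v \<times> 'w) set \<Rightarrow> 'a \<Rightarrow> bool" where
  "sums_fibres src tgt f B \<alpha> \<longleftrightarrow> (\<exists>p. (\<forall>c\<in>basis_at B (tgt \<alpha>). p c \<in> basis_at B (src \<alpha>)) \<and>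
      (\<forall>d\<in>basis_at B (src \<alpha>). f \<alpha> d = (\<Sum>c\<in>{c\<in>basis_at B (tgt \<alpha>). p c = d}. c)))"

definition maps_into_basis ::
    "('a \<Rightarrow> 'v) \<Rightarrow> ('a \<Rightarrow> 'v) \<Rightarrow> ('a \<Rightarrow> 'w \<Rightarrow> 'w) \<Rightarrow> ('v \<times> 'w) set \<Rightarrow> 'a \<Rightarrow> bool" where
  "maps_into_basis src tgt f B \<alpha> \<longleftrightarrow> (\<forall>d\<in>basis_at B (src \<alpha>). f \<alpha> d \<in> basis_at B (tgt \<alpha>))"

definition oriented_action ::
    "('a \<Rightarrow> 'v) \<Rightarrow> ('a \<Rightarrow> 'v) \<Rightarrow> ('a \<Rightarrow> 'w \<Rightarrow> 'w::comm_monoid_add) \<Rightarrow> ('v \<times> 'w) set \<Rightarrow> 'v \<Rightarrow> 'a \<Rightarrow> bool"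
  where
  "oriented_action src tgt f B r \<alpha> \<longleftrightarrow>
     (near src tgt r (src \<alpha>) (tgt \<alpha>) \<longrightarrow> sums_fibres src tgt f B \<alpha>) \<and>
     (near src tgt r (tgt \<alpha>) (src \<alpha>) \<longrightarrow> maps_into_basis src tgt f B \<alpha>)"

lemma simple_oriented_action:
  assumes T: "tree_quiver src tgt" and V0: "\<forall>z. z \<noteq> x \<longrightarrow> V z = {0}" and b: "b \<in> V x"
    and cl: "\<forall>a. \<forall>w\<in>V (src a). f a w \<in> V (tgt a)"
  shows "oriented_action src tgt f {(x, b)} x \<alpha>"
proof -
  have st: "src \<alpha> \<noteq> tgt \<alpha>" using T unfolding tree_quiver_def by blast
  have empty: "basis_at {(x, b)} z = {}" if "z \<noteq> x" for z using that by (auto simp: basis_at_def)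
  have "f \<alpha> b = 0" if "src \<alpha> = x" using V0 b cl that st by (metis singletonD)
  moreover have "tgt \<alpha> \<noteq> x" if "near src tgt x (src \<alpha>) (tgt \<alpha>)" "src \<alpha> \<noteq> x"
    using that near_root by metis
  moreover have "src \<alpha> \<noteq> x" if "near src tgt x (tgt \<alpha>) (src \<alpha>)"
    using that near_root st by metis
  moreover have "basis_at {(x, b)} x = {b}" by (simp add: basis_at_def)
  ultimately show ?thesis using empty[of "tgt \<alpha>"] empty[of "src \<alpha>"] st
    unfolding oriented_action_def sums_fibres_def maps_into_basis_def by (cases "src \<alpha> = x") auto
qed

lemma sums_fibres_cong: "g \<alpha> = f \<alpha> \<Longrightarrow> sums_fibres src tgt g B \<alpha> = sums_fibres src tgt f B \<alpha>"
  unfolding sums_fibres_def by simp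

lemma maps_into_basis_cong: "g \<alpha> = f \<alpha> \<Longrightarrow> maps_into_basis src tgt g B \<alpha> = maps_into_basis src tgt f B \<alpha>"
  unfolding maps_into_basis_def by simp

lemma sums_fibres_Union:
  assumes fib: "\<forall>i\<in>I. sums_fibres src tgt f (BB i) \<alpha>"
    and Bs: "basis_at B (src \<alpha>) = (\<Union>i\<in>I. basis_at (BB i) (src \<alpha>))"
    and Bt: "basis_at B (tgt \<alpha>) = (\<Union>i\<in>I. basis_at (BB i) (tgt \<alpha>))"
    and disj: "\<And>i j z. i \<in> I \<Longrightarrow> j \<in> I \<Longrightarrow> i \<noteq> j \<Longrightarrow> basis_at (BB i) z \<inter> basis_at (BB j) z = {}"
  shows "sums_fibres src tgt f B \<alpha>"
proof -
  obtain P where P: "\<forall>i\<in>I. (\<forall>c\<in>basis_at (BB i) (tgt \<alpha>). P i c \<in> basis_at (BB i) (src \<alpha>)) \<and>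
      (\<forall>d\<in>basis_at (BB i) (src \<alpha>). f \<alpha> d = (\<Sum>c\<in>{c\<in>basis_at (BB i) (tgt \<alpha>). P i c = d}. c))"
    using bchoice[OF fib[unfolded sums_fibres_def]] by blast
  define idx where "idx c = (THE i. i \<in> I \<and> c \<in> basis_at (BB i) (tgt \<alpha>))" for c
  have idx: "idx c = i" if "i \<in> I" "c \<in> basis_at (BB i) (tgt \<alpha>)" for i c
    unfolding idx_def using that disj by (intro the_equality) blast+
  show ?thesis unfolding sums_fibres_def
  proof (intro exI[of _ "\<lambda>c. P (idx c) c"] conjI ballI)
    fix c assume "c \<in> basis_at B (tgt \<alpha>)"
    then obtain i where i: "i \<in> I" "c \<in> basis_at (BB i) (tgt \<alpha>)" using Bt by blast
    then show "P (idx c) c \<in> basis_at B (src \<alpha>)" using P idx[OF i] Bs by blast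
  next
    fix d assume "d \<in> basis_at B (src \<alpha>)"
    then obtain i where i: "i \<in> I" "d \<in> basis_at (BB i) (src \<alpha>)" using Bs by blast
    have "{c \<in> basis_at B (tgt \<alpha>). P (idx c) c = d} = {c\<in>basis_at (BB i) (tgt \<alpha>). P i c = d}"
    proof (intro equalityI subsetI)
      fix c assume c: "c \<in> {c \<in> basis_at B (tgt \<alpha>). P (idx c) c = d}"
      then obtain j where j: "j \<in> I" "c \<in> basis_at (BB j) (tgt \<alpha>)" using Bt by blast
      then have "P j c = d" "P j c \<in> basis_at (BB j) (src \<alpha>)" using c idx[OF j] P by auto
      then have "j = i" using disj[of i j "src \<alpha>"] i j by blast
      then show "c \<in> {c\<in>basis_at (BB i) (tgt \<alpha>). P i c = d}" using j \<open>P j c = d\<close> by simp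
    qed (use idx[OF i(1)] Bt i(1) in auto)
    then show "f \<alpha> d = (\<Sum>c\<in>{c \<in> basis_at B (tgt \<alpha>). P (idx c) c = d}. c)" using P i by simp
  qed
qed

lemma maps_into_basis_Union:
  assumes "\<forall>i\<in>I. maps_into_basis src tgt f (BB i) \<alpha>"
    and "basis_at B (src \<alpha>) = (\<Union>i\<in>I. basis_at (BB i) (src \<alpha>))"
    and "basis_at B (tgt \<alpha>) = (\<Union>i\<in>I. basis_at (BB i) (tgt \<alpha>))"
  shows "maps_into_basis src tgt f B \<alpha>"
  using assms unfolding maps_into_basis_def by blast

locale radbasis_step = vector_space scale
  for scale :: "'k::field \<Rightarrow> 'w::ab_group_add \<Rightarrow> 'w" +
  fixes src tgt :: "'a \<Rightarrow> 'v" and V :: "'v \<Rightarrow> 'w set" and f :: "'a \<Rightarrow> 'w \<Rightarrow> 'w"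
    and x :: 'v and b :: 'w and I :: "nat set" and N :: "nat \<Rightarrow> 'v \<Rightarrow> 'w set"
    and y :: "nat \<Rightarrow> 'v" and bb :: "nat \<Rightarrow> 'w" and BB :: "nat \<Rightarrow> ('v \<times> 'w) set"
  assumes tree: "tree_quiver src tgt"
    and closed: "\<forall>a. \<forall>w\<in>V (src a). f a w \<in> V (tgt a)"
    and f0: "\<forall>a. f a 0 = 0"
    and root_vector: "b \<in> V x"
    and finite_summands: "finite I"
    and summands_subrep: "\<forall>i\<in>I. subrep scale src tgt (rest_sp x V) (rest_map src tgt x f) (N i)"
    and dsum: "is_dsum (rest_sp x V) N I"
    and summands_indecomposable: "\<forall>i\<in>I. indecomposable scale src tgt (N i) (rest_map src tgt x f)"
    and neighbours: "\<forall>i\<in>I. adjacent src tgt x (y i)"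
    and root_link: "\<forall>i\<in>I. \<exists>a. (src a = x \<and> tgt a = y i \<and>
                     (\<exists>u. (\<forall>j\<in>I. u j \<in> N j (y i)) \<and> f a b = sum u I \<and> u i = bb i))
                 \<or> (src a = y i \<and> tgt a = x \<and> f a (bb i) = b)"
    and summand_bases: "\<forall>i\<in>I. radbasis scale src tgt (N i) (rest_map src tgt x f) (y i) (bb i) (BB i)"
begin

lemma rest_map_ne: "src \<alpha> \<noteq> x \<Longrightarrow> tgt \<alpha> \<noteq> x \<Longrightarrow> rest_map src tgt x f \<alpha> = f \<alpha>"
  by (simp add: rest_map_def)

abbreviation step_basis :: "('v \<times> 'w) set" where
  "step_basis \<equiv> {(x, b)} \<union> (\<Union>i\<in>I. BB i)"

lemma summand_subspace: "i \<in> I \<Longrightarrow> subspace (N i z)"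
  using summands_subrep unfolding subrep_def by blast

lemma summand_closed: "i \<in> I \<Longrightarrow> \<forall>a. \<forall>w\<in>N i (src a). rest_map src tgt x f a w \<in> N i (tgt a)"
  using summands_subrep unfolding subrep_def by blast

lemma summand_basis: "i \<in> I \<Longrightarrow> w \<in> basis_at (BB i) z \<Longrightarrow> w \<in> N i z \<and> w \<noteq> 0"
  using radbasis_basic[OF bspec[OF summand_bases]] unfolding basis_at_def by simp

lemma summand_root: "i \<in> I \<Longrightarrow> basis_at (BB i) (y i) = {bb i}"
  using radbasis_basic[OF bspec[OF summand_bases]] by simp

lemma step_basis_root: "basis_at step_basis x = {b}"
  by (rule radbasis_step_root[OF dsum summand_bases])

lemma summand_bases_disjoint:
  "i \<in> I \<Longrightarrow> j \<in> I \<Longrightarrow> i \<noteq> j \<Longrightarrow> w \<in> basis_at (BB i) z \<Longrightarrow> w \<notin> basis_at (BB j) z"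
  using dsum_disjoint[OF dsum finite_summands _ _ _ _ , of z i j w] summand_subspace summand_basis
  by blast

lemma summand_vanishes:
  assumes i: "i \<in> I" and v: "adjacent src tgt x v" "v \<noteq> y i"
  shows "N i v = {0}"
proof -
  have "N i (y i) \<noteq> {0}" using summand_basis[OF i] summand_root[OF i] by blast
  moreover have "indecomposable scale src tgt (N i) (rest_map src tgt x f)"
    using summands_indecomposable i by simp
  ultimately show ?thesis
    using restriction_support[OF tree _ _ summand_closed[OF i] f0 _ _ v] summand_subspace[OF i]
      neighbours i by blast
qed

lemma summand_basis_neighbour:
  assumes i: "i \<in> I" and v: "adjacent src tgt x v"
  shows "basis_at (BB i) v = (if y i = v then {bb i} else {})"
  using summand_root[OF i] summand_vanishes[OF i v] summand_basis[OF i, of _ v] by auto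

lemma root_link_arrow:
  assumes i: "i \<in> I" and \<alpha>: "{src \<alpha>, tgt \<alpha>} = {x, y i}"
  shows "(src \<alpha> = x \<and> (\<exists>u. (\<forall>j\<in>I. u j \<in> N j (y i)) \<and> f \<alpha> b = sum u I \<and> u i = bb i))
    \<or> (tgt \<alpha> = x \<and> f \<alpha> (bb i) = b)"
proof -
  obtain a where a: "(src a = x \<and> tgt a = y i \<and>
      (\<exists>u. (\<forall>j\<in>I. u j \<in> N j (y i)) \<and> f a b = sum u I \<and> u i = bb i))
      \<or> (src a = y i \<and> tgt a = x \<and> f a (bb i) = b)" using root_link i by blast
  then have "{src a, tgt a} = {src \<alpha>, tgt \<alpha>}" using \<alpha> by auto
  then have "a = \<alpha>" by (rule arrow_unique[OF tree])
  then show ?thesis using a by blast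
qed

lemma root_arrow_value:
  assumes sx: "src \<alpha> = x"
  shows "f \<alpha> b = (\<Sum>i\<in>{i\<in>I. y i = tgt \<alpha>}. bb i)"
proof -
  have tx: "tgt \<alpha> \<noteq> x" using tree sx unfolding tree_quiver_def by metis
  have av: "adjacent src tgt x (tgt \<alpha>)" using adjacent_arrow sx by metis
  have fb: "f \<alpha> b \<in> rest_sp x V (tgt \<alpha>)" using closed root_vector sx tx by (auto simp: rest_sp_def)
  obtain u0 where u0: "\<forall>i\<in>I. u0 i \<in> N i (tgt \<alpha>)" "f \<alpha> b = sum u0 I"
    using dsum_decomp[OF dsum fb] by blast
  have u0_val: "u0 i = (if y i = tgt \<alpha> then bb i else 0)" if i: "i \<in> I" for i
  proof (cases "y i = tgt \<alpha>")
    case True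
    then obtain u where u: "\<forall>j\<in>I. u j \<in> N j (tgt \<alpha>)" "f \<alpha> b = sum u I" "u i = bb i"
      using root_link_arrow[OF i] sx tx by force
    show ?thesis using dsum_unique[OF dsum fb u0 u(1,2) i] u(3) True by simp
  next
    case False
    then show ?thesis using u0(1) i summand_vanishes[OF i av] by auto
  qed
  have "f \<alpha> b = (\<Sum>i\<in>I. if y i = tgt \<alpha> then bb i else 0)"
    using u0(2) u0_val by (auto intro: sum.cong)
  also have "\<dots> = (\<Sum>i\<in>{i\<in>I. y i = tgt \<alpha>}. bb i)"
    using sum.inter_filter[OF finite_summands, of bb "\<lambda>i. y i = tgt \<alpha>"] by simp
  finally show ?thesis .
qed

lemma step_basis_neighbour_sum:
  assumes v: "adjacent src tgt x v"
  shows "(\<Sum>c\<in>basis_at step_basis v. c) = (\<Sum>i\<in>{i\<in>I. y i = v}. bb i)"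
proof -
  have vx: "v \<noteq> x" using adjacent_neq[OF tree v] by simp
  have "basis_at step_basis v = bb ` {i\<in>I. y i = v}"
    unfolding basis_at_step[OF vx] using summand_basis_neighbour[OF _ v] by auto
  moreover have "inj_on bb {i\<in>I. y i = v}"
    using summand_bases_disjoint summand_root
    by (intro inj_onI) (metis (mono_tags) mem_Collect_eq singletonI)
  ultimately show ?thesis by (simp add: sum.reindex)
qed

lemma sums_fibres_from_root:
  assumes sx: "src \<alpha> = x"
  shows "sums_fibres src tgt f step_basis \<alpha>"
proof -
  have "adjacent src tgt x (tgt \<alpha>)" using adjacent_arrow[of src tgt \<alpha>] sx by simp
  then have "f \<alpha> b = (\<Sum>c\<in>basis_at step_basis (tgt \<alpha>). c)"
    using root_arrow_value[OF sx] step_basis_neighbour_sum by simp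
  then show ?thesis unfolding sums_fibres_def using step_basis_root sx
    by (intro exI[of _ "\<lambda>_. b"]) auto
qed

lemma maps_into_basis_to_root:
  assumes tx: "tgt \<alpha> = x"
  shows "maps_into_basis src tgt f step_basis \<alpha>"
  unfolding maps_into_basis_def
proof
  fix d assume d: "d \<in> basis_at step_basis (src \<alpha>)"
  have sx: "src \<alpha> \<noteq> x" using tree tx unfolding tree_quiver_def by metis
  have av: "adjacent src tgt x (src \<alpha>)" using adjacent_arrow adjacent_sym tx by metis
  obtain i where i: "i \<in> I" "d \<in> basis_at (BB i) (src \<alpha>)"
    using d unfolding basis_at_step[OF sx] by blast
  then have yi: "y i = src \<alpha>" and di: "d = bb i"
    using summand_basis_neighbour[OF i(1) av] by (auto split: if_splits)
  have "f \<alpha> (bb i) = b" using root_link_arrow[OF i(1)] yi tx sx by auto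
  then show "f \<alpha> d \<in> basis_at step_basis (tgt \<alpha>)" using di step_basis_root tx by simp
qed

lemma sums_fibres_away:
  assumes "src \<alpha> \<noteq> x" "tgt \<alpha> \<noteq> x"
    and "\<forall>i\<in>I. sums_fibres src tgt (rest_map src tgt x f) (BB i) \<alpha>"
  shows "sums_fibres src tgt f step_basis \<alpha>"
proof (rule sums_fibres_Union[OF _ basis_at_step basis_at_step])
  show "\<forall>i\<in>I. sums_fibres src tgt f (BB i) \<alpha>"
    using assms(3) sums_fibres_cong[where g = "rest_map src tgt x f" and f = f, OF rest_map_ne[OF assms(1,2)]]
    by blast
qed (use assms summand_bases_disjoint in blast)+

lemma maps_into_basis_away:
  assumes "src \<alpha> \<noteq> x" "tgt \<alpha> \<noteq> x"
    and "\<forall>i\<in>I. maps_into_basis src tgt (rest_map src tgt x f) (BB i) \<alpha>"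
  shows "maps_into_basis src tgt f step_basis \<alpha>"
proof (rule maps_into_basis_Union[OF _ basis_at_step basis_at_step])
  show "\<forall>i\<in>I. maps_into_basis src tgt f (BB i) \<alpha>"
    using assms(3) maps_into_basis_cong[where g = "rest_map src tgt x f" and f = f, OF rest_map_ne[OF assms(1,2)]]
    by blast
qed (use assms in blast)+

lemma step_basis_oriented_action:
  assumes IH: "\<And>i \<beta>. i \<in> I \<Longrightarrow> oriented_action src tgt (rest_map src tgt x f) (BB i) (y i) \<beta>"
  shows "oriented_action src tgt f step_basis x \<alpha>"
proof -
  have st: "src \<alpha> \<noteq> tgt \<alpha>" using tree unfolding tree_quiver_def by blast
  consider "src \<alpha> = x" | "tgt \<alpha> = x" | "src \<alpha> \<noteq> x" "tgt \<alpha> \<noteq> x" by blast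
  then show ?thesis
  proof cases
    case 1
    have "\<not> near src tgt x (tgt \<alpha>) (src \<alpha>)" using near_root[of src tgt x "tgt \<alpha>"] 1 st by auto
    then show ?thesis using sums_fibres_from_root[OF 1] unfolding oriented_action_def by simp
  next
    case 2
    have "\<not> near src tgt x (src \<alpha>) (tgt \<alpha>)" using near_root[of src tgt x "src \<alpha>"] 2 st by auto
    then show ?thesis using maps_into_basis_to_root[OF 2] unfolding oriented_action_def by simp
  next
    case 3
    show ?thesis unfolding oriented_action_def
    proof (intro conjI impI)
      assume nr: "near src tgt x (src \<alpha>) (tgt \<alpha>)"
      have "near src tgt (y i) (src \<alpha>) (tgt \<alpha>)" if "i \<in> I" for i
        using near_shift[OF nr 3(1)[symmetric] bspec[OF neighbours that] st[symmetric]] .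
      then show "sums_fibres src tgt f step_basis \<alpha>"
        using sums_fibres_away[OF 3] IH unfolding oriented_action_def by blast
    next
      assume nr: "near src tgt x (tgt \<alpha>) (src \<alpha>)"
      have "near src tgt (y i) (tgt \<alpha>) (src \<alpha>)" if "i \<in> I" for i
        using near_shift[OF nr 3(2)[symmetric] bspec[OF neighbours that] st] .
      then show "maps_into_basis src tgt f step_basis \<alpha>"
        using maps_into_basis_away[OF 3] IH unfolding oriented_action_def by blast
    qed
  qed
qed

end

context vector_space begin

lemma radbasis_oriented_action:
  assumes T: "tree_quiver src tgt" and R: "radbasis scale src tgt V f x b B"
    and cl: "\<forall>a. \<forall>w\<in>V (src a). f a w \<in> V (tgt a)" and f0: "\<forall>a. f a 0 = 0"
  shows "oriented_action src tgt f B x \<alpha>"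
  using R cl f0
proof (induct arbitrary: \<alpha>)
  case (simple V x b f)
  then show ?case using simple_oriented_action[OF T] by blast
next
  case (step V f r b I N y bb BB)
  have "\<forall>i\<in>I. adjacent src tgt r (y i)"
    "\<forall>i\<in>I. radbasis scale src tgt (N i) (rest_map src tgt r f) (y i) (bb i) (BB i)"
    using step(11,13) by simp_all
  moreover have "\<forall>i\<in>I. \<exists>a. (src a = r \<and> tgt a = y i \<and>
      (\<exists>u. (\<forall>j\<in>I. u j \<in> N j (y i)) \<and> f a b = sum u I \<and> u i = bb i))
      \<or> (src a = y i \<and> tgt a = r \<and> f a (bb i) = b)"
    using step(12) by simp
  ultimately interpret radbasis_step scale src tgt V f r b I N y bb BB
    using T step(4,6-9,14,15) by unfold_locales
  have g0: "\<forall>a. rest_map src tgt r f a 0 = 0" using step(15) by (simp add: rest_map_def)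
  show ?case
  proof (rule step_basis_oriented_action)
    fix i \<beta> assume i: "i \<in> I"
    show "oriented_action src tgt (rest_map src tgt r f) (BB i) (y i) \<beta>"
      using conjunct2[OF bspec[OF step(13) i], THEN mp, OF summand_closed[OF i], THEN mp, OF g0]
      by (rule spec)
  qed
qed

subsection \<open>Arrows of exceptional representations\<close>

lemma lin_on_zero: "lin_on scale A g \<Longrightarrow> 0 \<in> A \<Longrightarrow> g 0 = 0"
  unfolding lin_on_def by (metis add_0 add_cancel_right_right)

lemma lin_on_span_image:
  assumes Y: "subspace Y" "Bs \<subseteq> Y" "Y \<subseteq> span Bs"
    and lin: "lin_on scale Y g" and gB: "\<forall>d\<in>Bs. g d \<in> span T"
    and u: "u \<in> Y"
  shows "g u \<in> span T"
proof -
  have "u \<in> span Bs" using u Y by blast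
  then have "u \<in> Y \<and> g u \<in> span T"
  proof (induct rule: span_induct_alt)
    case base
    then show ?case using lin_on_zero[OF lin] subspace_0[OF Y(1)] span_zero by simp
  next
    case (step c d w)
    have dY: "d \<in> Y" using step(1) Y by blast
    then have cd: "c *s d \<in> Y" using subspace_scale[OF Y(1)] by blast
    have "g (c *s d + w) = c *s g d + g w" using lin cd dY step(2) unfolding lin_on_def by simp
    moreover have "c *s g d + g w \<in> span T" using gB step span_scale span_add by blast
    moreover have "c *s d + w \<in> Y" using cd step(2) subspace_add[OF Y(1)] by blast
    ultimately show ?case by simp
  qed
  then show ?thesis by simp
qed

lemma exists_outside_span:
  assumes "finite T" "card T < dim W"
  shows "\<exists>w\<in>W. w \<notin> span T"
  using dim_le_card[of W T] assms by force

lemma lin_on_coordinate: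
  assumes indep: "independent Bs" and A: "A \<subseteq> span Bs"
  shows "lin_on scale A (\<lambda>v. representation Bs v d *s w)"
  unfolding lin_on_def
proof (intro conjI ballI allI)
  fix u v assume "u \<in> A" "v \<in> A"
  then have "u \<in> span Bs" "v \<in> span Bs" using A by auto
  then show "representation Bs (u + v) d *s w = representation Bs u d *s w + representation Bs v d *s w"
    by (simp add: representation_add[OF indep] scale_left_distrib)
next
  fix c u assume "u \<in> A"
  then have "u \<in> span Bs" using A by auto
  then show "representation Bs (c *s u) d *s w = c *s (representation Bs u d *s w)"
    by (simp add: representation_scale[OF indep])
qed

text \<open>The representation-theoretic heart: if Ext^1(V,V) vanishes, then every arrow map with a
  kernel vector v0 (detected by a nonzero coordinate in a basis) is surjective.  Otherwise the
  cocycle v \<mapsto> coordinate(v)\<cdot>w0, for w0 outside the image, would be a coboundary, forcing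
  w0 = f(\<phi> v0).\<close>
lemma exceptional_kernel_surjective:
  assumes ext: "ext1_vanishes scale src tgt V f"
    and subV: "\<forall>z. subspace (V z)"
    and indep: "independent Bs" and spans: "V (src \<alpha>) \<subseteq> span Bs"
    and v0: "v0 \<in> V (src \<alpha>)" "f \<alpha> v0 = 0" and coord: "representation Bs v0 d = 1"
    and w0: "w0 \<in> V (tgt \<alpha>)"
  shows "w0 \<in> f \<alpha> ` V (src \<alpha>)"
proof -
  define h where "h \<beta> = (if \<beta> = \<alpha> then (\<lambda>v. representation Bs v d *s w0) else (\<lambda>v. 0))" for \<beta>
  have "lin_on scale (V (src \<alpha>)) (h \<alpha>)"
    using lin_on_coordinate[OF indep spans] by (simp add: h_def)
  moreover have "h \<alpha> ` V (src \<alpha>) \<subseteq> V (tgt \<alpha>)"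
    unfolding h_def using subspace_scale[OF subV[rule_format] w0] by auto
  moreover have "lin_on scale (V (src a)) (h a) \<and> h a ` V (src a) \<subseteq> V (tgt a)" if "a \<noteq> \<alpha>" for a
    using that subspace_0[OF subV[rule_format]] unfolding lin_on_def h_def by auto
  ultimately have cocycle: "lin_on scale (V (src a)) (h a) \<and> h a ` V (src a) \<subseteq> V (tgt a)" for a
    by (cases "a = \<alpha>") auto
  obtain \<phi> where \<phi>: "\<forall>z. lin_on scale (V z) (\<phi> z) \<and> \<phi> z ` V z \<subseteq> V z"
    and cobound: "\<forall>a. \<forall>v\<in>V (src a). h a v = f a (\<phi> (src a) v) - \<phi> (tgt a) (f a v)"
    using ext[unfolded ext1_vanishes_def, rule_format, of h, OF cocycle] by (elim exE conjE)
  have "\<phi> (tgt \<alpha>) 0 = 0" using lin_on_zero \<phi> subspace_0[OF subV[rule_format]] by blast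
  moreover have "h \<alpha> v0 = w0" using coord by (simp add: h_def)
  moreover have "h \<alpha> v0 = f \<alpha> (\<phi> (src \<alpha>) v0) - \<phi> (tgt \<alpha>) (f \<alpha> v0)" using cobound v0(1) by blast
  ultimately have "w0 = f \<alpha> (\<phi> (src \<alpha>) v0)" using v0(2) by simp
  moreover have "\<phi> (src \<alpha>) v0 \<in> V (src \<alpha>)" using \<phi> v0(1) by blast
  ultimately show ?thesis by blast
qed

context
  fixes src tgt :: "'e \<Rightarrow> 'v" and V :: "'v \<Rightarrow> 'b set" and f :: "'e \<Rightarrow> 'b \<Rightarrow> 'b"
    and \<alpha> :: 'e and Bs Bt :: "'b set"
  assumes ext: "ext1_vanishes scale src tgt V f"
    and subV: "\<forall>z. subspace (V z)"
    and lin: "lin_on scale (V (src \<alpha>)) (f \<alpha>)"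
    and Bs: "Bs \<subseteq> V (src \<alpha>)" "independent Bs" "V (src \<alpha>) \<subseteq> span Bs" "finite Bs"
    and Bt: "finite Bt" "card Bt = dim (V (tgt \<alpha>))"
    and card_eq: "card Bs = card Bt"
begin

lemma kernel_and_small_image_absurd:
  assumes v0: "v0 \<in> V (src \<alpha>)" "f \<alpha> v0 = 0" "representation Bs v0 d = 1"
    and T: "finite T" "card T < card Bs" "\<forall>d\<in>Bs. f \<alpha> d \<in> span T"
  shows False
proof -
  obtain w0 where w0: "w0 \<in> V (tgt \<alpha>)" "w0 \<notin> span T"
    using exists_outside_span[OF T(1)] T(2) card_eq Bt(2) by auto
  obtain u where "u \<in> V (src \<alpha>)" "w0 = f \<alpha> u"
    using exceptional_kernel_surjective[OF ext subV Bs(2,3) v0 w0(1)] by blast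
  then show False using lin_on_span_image[OF _ Bs(1,3) lin T(3)] subV w0(2) by blast
qed

text \<open>An arrow summing the fibres of p: here p must be a bijection, and the arrow is its inverse.\<close>
lemma fibre_sums_bijective:
  assumes p: "\<forall>c\<in>Bt. p c \<in> Bs" and fib: "\<forall>d\<in>Bs. f \<alpha> d = (\<Sum>c\<in>{c\<in>Bt. p c = d}. c)"
  shows "\<exists>g. bij_betw g Bs Bt \<and> (\<forall>d\<in>Bs. f \<alpha> d = g d)"
proof (cases "p ` Bt = Bs")
  case True
  have inj: "inj_on p Bt" using eq_card_imp_inj_on[OF Bt(1), of p] True card_eq by simp
  let ?q = "inv_into Bt p"
  have "{c\<in>Bt. p c = d} = {?q d}" if "d \<in> Bs" for d
  proof -
    have "?q d \<in> Bt" "p (?q d) = d" using that True by (auto intro: inv_into_into f_inv_into_f)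
    moreover have "c = ?q d" if "c \<in> Bt" "p c = d" for c
      using that inj by (auto intro: inv_into_f_f[symmetric])
    ultimately show ?thesis by blast
  qed
  moreover have "bij_betw ?q Bs Bt"
    using bij_betw_inv_into[of p Bt Bs] inj True unfolding bij_betw_def by blast
  ultimately show ?thesis using fib by (intro exI[of _ ?q]) auto
next
  case False
  then obtain d0 where d0: "d0 \<in> Bs" "d0 \<notin> p ` Bt" using p by blast
  then have "{c\<in>Bt. p c = d0} = {}" by blast
  then have fd0: "f \<alpha> d0 = 0" using fib d0(1) by (metis sum.empty)
  let ?T = "(\<lambda>d. \<Sum>c\<in>{c\<in>Bt. p c = d}. c) ` (Bs - {d0})"
  have "f \<alpha> d \<in> span ?T" if "d \<in> Bs" for d
    using that fd0 fib span_base[of _ ?T] span_zero by (cases "d = d0") auto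
  moreover have "card ?T < card Bs"
    using card_image_le[of "Bs - {d0}" "\<lambda>d. \<Sum>c\<in>{c\<in>Bt. p c = d}. c"]
      card_Diff1_less[OF Bs(4) d0(1)] Bs(4) by simp
  moreover have "representation Bs d0 d0 = 1" using representation_basis[OF Bs(2) d0(1)] by simp
  ultimately show ?thesis
    using kernel_and_small_image_absurd[of d0 d0 ?T] d0(1) Bs(1,4) fd0 by blast
qed

lemma basis_map_bijective:
  assumes into: "\<forall>d\<in>Bs. f \<alpha> d \<in> Bt"
  shows "\<exists>g. bij_betw g Bs Bt \<and> (\<forall>d\<in>Bs. f \<alpha> d = g d)"
proof (cases "inj_on (f \<alpha>) Bs")
  case True
  have "f \<alpha> ` Bs \<subseteq> Bt" using into by blast
  moreover have "card (f \<alpha> ` Bs) = card Bt" using card_image[OF True] card_eq by simp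
  ultimately have "f \<alpha> ` Bs = Bt" by (rule card_subset_eq[OF Bt(1)])
  then show ?thesis using True unfolding bij_betw_def by blast
next
  case False
  then obtain d1 d2 where dd: "d1 \<in> Bs" "d2 \<in> Bs" "d1 \<noteq> d2" "f \<alpha> d1 = f \<alpha> d2"
    unfolding inj_on_def by blast
  have dV: "d1 \<in> V (src \<alpha>)" "d2 \<in> V (src \<alpha>)" using dd Bs(1) by blast+
  have v0: "d1 - d2 \<in> V (src \<alpha>)" using subspace_diff[OF subV[rule_format] dV] .
  have "f \<alpha> ((d1 - d2) + d2) = f \<alpha> (d1 - d2) + f \<alpha> d2"
    using lin v0 dV(2) unfolding lin_on_def by blast
  then have fv0: "f \<alpha> (d1 - d2) = 0" using dd(4) by simp
  have coord: "representation Bs (d1 - d2) d1 = 1"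
    using representation_diff[OF Bs(2) span_base[OF dd(2)] span_base[OF dd(1)]]
      representation_basis[OF Bs(2) dd(1)] representation_basis[OF Bs(2) dd(2)] dd(3) by simp
  have "card (f \<alpha> ` Bs) \<le> card Bs" by (rule card_image_le[OF Bs(4)])
  moreover have "card (f \<alpha> ` Bs) \<noteq> card Bs" using eq_card_imp_inj_on[OF Bs(4)] False by blast
  ultimately have "card (f \<alpha> ` Bs) < card Bs" by simp
  moreover have "\<forall>d\<in>Bs. f \<alpha> d \<in> span (f \<alpha> ` Bs)" by (simp add: span_base)
  ultimately show ?thesis
    using kernel_and_small_image_absurd[OF v0 fv0 coord] Bs(4) by blast
qed

end

end

lemma bij_betw_enumerations:
  assumes bij: "bij_betw g A C" and fin: "finite A" and agree: "\<forall>d\<in>A. F d = g d"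
  shows "\<exists>us ws. distinct us \<and> distinct ws \<and> set us = A \<and> set ws = C \<and>
           length us = length ws \<and> (\<forall>j < length us. F (us ! j) = ws ! j)"
proof -
  obtain us where us: "distinct us" "set us = A" using finite_distinct_list[OF fin] by blast
  have "distinct (map g us)" "set (map g us) = C"
    using us bij unfolding bij_betw_def by (auto simp: distinct_map)
  moreover have "\<forall>j < length us. F (us ! j) = map g us ! j" using agree us(2) nth_mem by fastforce
  ultimately show ?thesis using us by (intro exI[of _ us] exI[of _ "map g us"]) auto
qed

context vector_space begin

lemma radbasis_arrow_bijection:
  assumes T: "tree_quiver src tgt" and rep: "is_rep scale src tgt V f"
    and exc: "exceptional scale src tgt V f" and R: "radbasis scale src tgt V f x b B"
    and dims: "dim (V (src \<alpha>)) = dim (V (tgt \<alpha>))"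
  shows "\<exists>g. bij_betw g (basis_at B (src \<alpha>)) (basis_at B (tgt \<alpha>)) \<and>
           (\<forall>d\<in>basis_at B (src \<alpha>). f \<alpha> d = g d)"
proof -
  have subV: "\<forall>z. subspace (V z)" and cl: "\<forall>a. \<forall>w\<in>V (src a). f a w \<in> V (tgt a)"
    and lin: "\<And>a. lin_on scale (V (src a)) (f a)" using rep unfolding is_rep_def by blast+
  have f0: "\<forall>a. f a 0 = 0" using lin_on_zero[OF lin] subspace_0 subV by blast
  have ext: "ext1_vanishes scale src tgt V f" using exc unfolding exceptional_def by blast
  note Bs = radbasis_basis_at[OF R subV, where z = "src \<alpha>"]
  note Bt = radbasis_basis_at[OF R subV, where z = "tgt \<alpha>"]
  have card_eq: "card (basis_at B (src \<alpha>)) = card (basis_at B (tgt \<alpha>))" using Bs(5) Bt(5) dims by simp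
  note bijective = fibre_sums_bijective[OF ext subV lin Bs(1-4) Bt(4,5) card_eq]
    basis_map_bijective[OF ext subV lin Bs(1-4) Bt(4,5) card_eq]
  have arrows: "oriented_action src tgt f B x \<alpha>" using radbasis_oriented_action[OF T R cl f0] .
  from edge_oriented[OF T adjacent_arrow, of x \<alpha>] show ?thesis
  proof
    assume "near src tgt x (src \<alpha>) (tgt \<alpha>)"
    then show ?thesis using arrows bijective(1) unfolding oriented_action_def sums_fibres_def by blast
  next
    assume "near src tgt x (tgt \<alpha>) (src \<alpha>)"
    then show ?thesis using arrows bijective(2) unfolding oriented_action_def maps_into_basis_def by blast
  qed
qed

end

theorem corollary2:
  fixes s :: "'k::field \<Rightarrow> 'w::ab_group_add \<Rightarrow> 'w"
    and src tgt :: "'a \<Rightarrow> 'v"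
    and V :: "'v \<Rightarrow> 'w set" and f :: "'a \<Rightarrow> 'w \<Rightarrow> 'w"
    and x :: 'v and b :: 'w and B :: "('v \<times> 'w) set" and \<alpha> :: 'a
  assumes "vector_space s"
    and "tree_quiver src tgt" and "locally_finite src tgt"
    and "is_rep s src tgt V f"
    and "radiation s src tgt V f x"
    and "exceptional s src tgt V f"
    and "radbasis s src tgt V f x b B"
    and "vector_space.dim s (V (src \<alpha>)) = vector_space.dim s (V (tgt \<alpha>))"
  shows "\<exists>us ws. distinct us \<and> distinct ws \<and>
            set us = {w. (src \<alpha>, w) \<in> B} \<and> set ws = {w. (tgt \<alpha>, w) \<in> B} \<and>
            length us = length ws \<and>
            (\<forall>j < length us. f \<alpha> (us ! j) = ws ! j)"
proof -
  interpret vector_space s by (rule assms(1))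
  have subV: "\<forall>z. subspace (V z)" using assms(4) unfolding is_rep_def by blast
  obtain g where g: "bij_betw g (basis_at B (src \<alpha>)) (basis_at B (tgt \<alpha>))"
      "\<forall>d\<in>basis_at B (src \<alpha>). f \<alpha> d = g d"
    using radbasis_arrow_bijection[OF assms(2,4,6,7,8)] by blast
  show ?thesis
    using bij_betw_enumerations[OF g(1) radbasis_basis_at(4)[OF assms(7) subV] g(2)]
    unfolding basis_at_def .
qed

end
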